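(* Let $\mathcal{H}=\mathcal{H}_h\oplus\mathcal{H}_h$ with basis $|l,m\rangle_\pm$, representation $\pi=\pi_+\oplus\pi_-$ of $\mathcal{A}(S^2_q)$, and let $D$ be the self-adjoint operator $D|l,m\rangle_\pm=(l+\frac12)|l,m\rangle_\mp$. Then for every $x\in\mathcal{A}(S^2_q)$ the commutator $[D,\pi(x)]$ is bounded.
   Context: $0<q\le1$ and $[x]:=\frac{q^x-q^{-x}}{q-q^{-1}}$. $\mathcal{A}(S^2_q)$ is the $*$-algebra generated by $a,a^*,b=b^*$ with $ba=q^2ab$, $a^*b=q^2ba^*$, $a^*a+b^2=1$, $q^2aa^*+q^{-2}b^2=q^2$. $\mathcal{H}_h=\bigoplus_{l=\frac12,\frac32,\dots}V_l$, $V_l$ with orthonormal basis $|l,m\rangle$, $m=-l,\dots,l$; $|l,m\rangle_\pm$ denote the basis vectors of the two copies in $\mathcal{H}$. The representations $\pi_\pm$ on $\mathcal{H}_h$ are given by $\pi_\pm(a)|l,m\rangle=\pm(1+q^2)\frac{q^{m-\frac12}}{[2l][2l+2]}\sqrt{[l+m+1][l-m]}|l,m+1\rangle+\frac{q^{m-l-\frac12}}{[2l+2]}\sqrt{[l+m+1][l+m+2]}|l+1,m+1\rangle-\frac{q^{m+l+\frac12}}{[2l]}\sqrt{[l-m][l-m-1]}|l-1,m\rangle$, $\pi_\pm(b)|l,m\rangle=\pm\frac{[l-m+1][l+m]-q^2[l-m][l+m+1]}{[2l][2l+2]}|l,m\rangle-\frac{q^{m+1}}{[2l+2]}\sqrt{[l-m+1][l+m+1]}|l+1,m\rangle-\frac{q^{m+1}}{[2l]}\sqrt{[l-m][l+m]}|l-1,m\rangle$,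 $\pi_\pm(a^* )=\pi_\pm(a)^*$ (vectors with $|m|>l$ or $l<\frac12$ are zero). *)

theory Defs
  imports "HOL-Analysis.Analysis"
begin

text \<open>q-numbers [x] = (q^x - q^-x)/(q - q^-1); at q = 1 the (limit) value x is used.\<close>
definition qnum :: "real \<Rightarrow> real \<Rightarrow> real" where
  "qnum q x = (if q = 1 then x else (q powr x - q powr (-x)) / (q - inverse q))"

text \<open>Index set of the basis |l,m>_s of H = H_h (+) H_h; s = True is the + copy.\<close>
type_synonym idx = "bool \<times> real \<times> real"

definition valid_lm :: "real \<Rightarrow> real \<Rightarrow> bool" where
  "valid_lm l m \<longleftrightarrow> (\<exists>k::nat. l = real k + 1/2) \<and> m - l \<in> \<int> \<and> \<bar>m\<bar> \<le> l"

text \<open>Finite linear combinations of basis vectors (the dense domain of finite vectors).\<close>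
definition finvec :: "(idx \<Rightarrow> complex) \<Rightarrow> bool" where
  "finvec v \<longleftrightarrow> finite {i. v i \<noteq> 0} \<and> (\<forall>s l m. v (s,l,m) \<noteq> 0 \<longrightarrow> valid_lm l m)"

definition sgnb :: "bool \<Rightarrow> real" where "sgnb s = (if s then 1 else -1)"

text \<open>Coefficient of |l',m'> in pi_sigma(a)|l,m>.\<close>
definition coef_a :: "real \<Rightarrow> real \<Rightarrow> real \<Rightarrow> real \<Rightarrow> real \<Rightarrow> real \<Rightarrow> real" where
  "coef_a q \<sigma> l m l' m' =
    (if valid_lm l m \<and> valid_lm l' m' then
       (if l' = l \<and> m' = m + 1 then
          \<sigma> * (1 + q\<^sup>2) * q powr (m - 1/2) / (qnum q (2*l) * qnum q (2*l+2))
            * sqrt (qnum q (l+m+1) * qnum q (l-m)) else 0)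
     + (if l' = l + 1 \<and> m' = m + 1 then
          q powr (m - l - 1/2) / qnum q (2*l+2) * sqrt (qnum q (l+m+1) * qnum q (l+m+2)) else 0)
     + (if l' = l - 1 \<and> m' = m then
          - (q powr (m + l + 1/2) / qnum q (2*l) * sqrt (qnum q (l-m) * qnum q (l-m-1))) else 0)
     else 0)"

text \<open>Coefficient of |l',m'> in pi_sigma(b)|l,m>.\<close>
definition coef_b :: "real \<Rightarrow> real \<Rightarrow> real \<Rightarrow> real \<Rightarrow> real \<Rightarrow> real \<Rightarrow> real" where
  "coef_b q \<sigma> l m l' m' =
    (if valid_lm l m \<and> valid_lm l' m' then
       (if l' = l \<and> m' = m then
          \<sigma> * (qnum q (l-m+1) * qnum q (l+m) - q\<^sup>2 * qnum q (l-m) * qnum q (l+m+1))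
            / (qnum q (2*l) * qnum q (2*l+2)) else 0)
     + (if l' = l + 1 \<and> m' = m then
          - (q powr (m + 1) / qnum q (2*l+2) * sqrt (qnum q (l-m+1) * qnum q (l+m+1))) else 0)
     + (if l' = l - 1 \<and> m' = m then
          - (q powr (m + 1) / qnum q (2*l) * sqrt (qnum q (l-m) * qnum q (l+m))) else 0)
     else 0)"

text \<open>Matrices of pi = pi_+ (+) pi_- on H: entry (target, source).\<close>
definition piA :: "real \<Rightarrow> idx \<Rightarrow> idx \<Rightarrow> complex" where
  "piA q i j = (case i of (s', l', m') \<Rightarrow> case j of (s, l, m) \<Rightarrow>
      if s' = s then complex_of_real (coef_a q (sgnb s) l m l' m') else 0)"

text \<open>pi(a^*) = pi(a)^*: conjugate transpose (coefficients are real).\<close>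
definition piAstar :: "real \<Rightarrow> idx \<Rightarrow> idx \<Rightarrow> complex" where
  "piAstar q i j = cnj (piA q j i)"

definition piB :: "real \<Rightarrow> idx \<Rightarrow> idx \<Rightarrow> complex" where
  "piB q i j = (case i of (s', l', m') \<Rightarrow> case j of (s, l, m) \<Rightarrow>
      if s' = s then complex_of_real (coef_b q (sgnb s) l m l' m') else 0)"

definition mat_op :: "(idx \<Rightarrow> idx \<Rightarrow> complex) \<Rightarrow> (idx \<Rightarrow> complex) \<Rightarrow> (idx \<Rightarrow> complex)" where
  "mat_op M v = (\<lambda>i. \<Sum>j\<in>{j. v j \<noteq> 0}. M i j * v j)"

definition Dop :: "(idx \<Rightarrow> complex) \<Rightarrow> (idx \<Rightarrow> complex)" where
  "Dop v = (\<lambda>(s, l, m). complex_of_real (l + 1/2) * v (\<not> s, l, m))"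

text \<open>pi(A(S^2_q)): the unital complex algebra generated by pi(a), pi(a^*), pi(b)
  (a *-algebra, since the generating set is closed under adjoints).\<close>
inductive_set piAlg :: "real \<Rightarrow> ((idx \<Rightarrow> complex) \<Rightarrow> (idx \<Rightarrow> complex)) set" for q :: real where
  unit: "(\<lambda>v. v) \<in> piAlg q"
| gen_a: "mat_op (piA q) \<in> piAlg q"
| gen_astar: "mat_op (piAstar q) \<in> piAlg q"
| gen_b: "mat_op (piB q) \<in> piAlg q"
| add: "T \<in> piAlg q \<Longrightarrow> S \<in> piAlg q \<Longrightarrow> (\<lambda>v i. T v i + S v i) \<in> piAlg q"
| smult: "T \<in> piAlg q \<Longrightarrow> (\<lambda>v i. c * T v i) \<in> piAlg q"
| mult: "T \<in> piAlg q \<Longrightarrow> S \<in> piAlg q \<Longrightarrow> (\<lambda>v. T (S v)) \<in> piAlg q"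

definition bounded_fin :: "((idx \<Rightarrow> complex) \<Rightarrow> (idx \<Rightarrow> complex)) \<Rightarrow> bool" where
  "bounded_fin T \<longleftrightarrow> (\<exists>C::real. \<forall>v. finvec v \<longrightarrow>
      (\<lambda>i. (cmod (T v i))\<^sup>2) summable_on UNIV \<and>
      (\<Sum>\<^sub>\<infinity>i. (cmod (T v i))\<^sup>2) \<le> C\<^sup>2 * (\<Sum>i\<in>{i. v i \<noteq> 0}. (cmod (v i))\<^sup>2))"

end

theory Submission
  imports Defs
begin

text \<open>Call an operator on finite vectors Lipschitz if it and its commutator with D are
  bounded. By the Leibniz rule [D, TS] = [D, T] S + T [D, S], Lipschitz operators form an
  algebra, so it suffices to treat pi(a), pi(a^*) and pi(b). In the basis |l,m>_\<plusminus> these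
  matrices change l by 0 or \<plusminus>1 only, so by the Schur test their commutators with D are
  bounded as soon as their entries are. On the l-changing parts, which pi_+ and pi_- share,
  the commutator only picks up the eigenvalue difference \<plusminus>1 of |D|; on the l-preserving
  part, whose sign differs between pi_+ and pi_-, it is multiplied by 2(l + 1/2). These
  entries stay bounded: at q = 1 the l-preserving coefficients are O(1/l), and for q < 1
  the estimate q^(1-x) \<le> [x] \<le> q^(1-x) / (1 - q^2) shows that all coefficients are bounded
  and the l-preserving ones are O(q^(2l)).\<close>

type_synonym vec = "idx \<Rightarrow> complex"

definition supp :: "('a \<Rightarrow> complex) \<Rightarrow> 'a set" where
  "supp v = {i. v i \<noteq> 0}"

definition sqnorm :: "('a \<Rightarrow> complex) \<Rightarrow> real" where
  "sqnorm v = (\<Sum>i\<in>supp v. (cmod (v i))\<^sup>2)"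

lemma sqnorm_eq_sum:
  assumes "finite A" and "supp v \<subseteq> A"
  shows "sqnorm v = (\<Sum>i\<in>A. (cmod (v i))\<^sup>2)"
  unfolding sqnorm_def by (rule sum.mono_neutral_left) (use assms in \<open>auto simp: supp_def\<close>)

lemma sqnorm_nonneg: "0 \<le> sqnorm v"
  by (simp add: sqnorm_def sum_nonneg)

lemma sqnorm_add_le:
  assumes "finite (supp u)" and "finite (supp v)"
  shows "sqnorm (\<lambda>i. u i + v i) \<le> 2 * sqnorm u + 2 * sqnorm v"
proof -
  let ?A = "supp u \<union> supp v"
  have pointwise: "(cmod (u i + v i))\<^sup>2 \<le> 2 * (cmod (u i))\<^sup>2 + 2 * (cmod (v i))\<^sup>2" for i
  proof -
    have "(cmod (u i + v i))\<^sup>2 \<le> (cmod (u i) + cmod (v i))\<^sup>2"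
      by (simp add: norm_triangle_ineq power_mono)
    also have "\<dots> \<le> 2 * (cmod (u i))\<^sup>2 + 2 * (cmod (v i))\<^sup>2"
      using zero_le_power2[of "cmod (u i) - cmod (v i)"] unfolding power2_diff power2_sum by linarith
    finally show ?thesis .
  qed
  have "sqnorm (\<lambda>i. u i + v i) = (\<Sum>i\<in>?A. (cmod (u i + v i))\<^sup>2)"
    by (rule sqnorm_eq_sum) (use assms in \<open>auto simp: supp_def\<close>)
  also have "\<dots> \<le> (\<Sum>i\<in>?A. 2 * (cmod (u i))\<^sup>2 + 2 * (cmod (v i))\<^sup>2)"
    by (rule sum_mono) (rule pointwise)
  also have "\<dots> = 2 * sqnorm u + 2 * sqnorm v"
    using assms by (simp add: sum.distrib sum_distrib_left sqnorm_eq_sum[of ?A])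
  finally show ?thesis .
qed

lemma sqnorm_scale:
  assumes "finite (supp v)"
  shows "sqnorm (\<lambda>i. c * v i) = (cmod c)\<^sup>2 * sqnorm v"
proof -
  have "sqnorm (\<lambda>i. c * v i) = (\<Sum>i\<in>supp v. (cmod (c * v i))\<^sup>2)"
    by (rule sqnorm_eq_sum) (use assms in \<open>auto simp: supp_def\<close>)
  then show ?thesis
    by (simp add: sqnorm_def norm_mult power_mult_distrib sum_distrib_left)
qed

lemma finite_supp_finvec: "finvec v \<Longrightarrow> finite (supp v)"
  by (simp add: finvec_def supp_def)

lemma finvec_add:
  assumes "finvec u" and "finvec v"
  shows "finvec (\<lambda>i. u i + v i)"
proof -
  have "{i. u i + v i \<noteq> 0} \<subseteq> {i. u i \<noteq> 0} \<union> {i. v i \<noteq> 0}" by auto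
  with assms show ?thesis unfolding finvec_def by (auto intro: finite_subset)
qed

lemma finvec_scale: "finvec v \<Longrightarrow> finvec (\<lambda>i. c * v i)"
  unfolding finvec_def by (auto intro: finite_subset[of _ "{i. v i \<noteq> 0}"])

lemma finvec_diff: "finvec u \<Longrightarrow> finvec v \<Longrightarrow> finvec (\<lambda>i. u i - v i)"
  using finvec_add[of u "\<lambda>i. (-1) * v i"] finvec_scale[of v "-1"] by simp

definition flip :: "idx \<Rightarrow> idx" where
  "flip i = (\<not> fst i, snd i)"

lemma flip_flip [simp]: "flip (flip i) = i"
  by (simp add: flip_def)

lemma snd_flip [simp]: "snd (flip i) = snd i"
  by (simp add: flip_def)

lemma inj_flip: "inj flip"
  by (metis flip_flip injI)

definition weight :: "idx \<Rightarrow> real" where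
  "weight i = fst (snd i) + 1/2"

lemma weight_flip [simp]: "weight (flip i) = weight i"
  by (simp add: weight_def)

lemma Dop_apply: "Dop v i = complex_of_real (weight i) * v (flip i)"
  by (cases i) (simp add: Dop_def flip_def weight_def)

lemma supp_Dop: "supp (Dop v) \<subseteq> flip ` supp v"
proof
  fix i assume "i \<in> supp (Dop v)"
  then have "flip i \<in> supp v" by (simp add: supp_def Dop_apply)
  then show "i \<in> flip ` supp v" by (metis flip_flip imageI)
qed

lemma finvec_Dop: "finvec v \<Longrightarrow> finvec (Dop v)"
  using supp_Dop[of v] finite_subset unfolding finvec_def supp_def
  by (fastforce simp: Dop_def)

lemma Dop_add: "Dop (\<lambda>i. u i + v i) = (\<lambda>i. Dop u i + Dop v i)"
  by (simp add: fun_eq_iff Dop_apply distrib_left)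

lemma Dop_scale: "Dop (\<lambda>i. c * v i) = (\<lambda>i. c * Dop v i)"
  by (simp add: fun_eq_iff Dop_apply mult.left_commute)

section \<open>Lipschitz operators\<close>

type_synonym operator = "vec \<Rightarrow> vec"

definition finvec_closed :: "operator \<Rightarrow> bool" where
  "finvec_closed T \<longleftrightarrow> (\<forall>v. finvec v \<longrightarrow> finvec (T v))"

definition fin_linear :: "operator \<Rightarrow> bool" where
  "fin_linear T \<longleftrightarrow>
     (\<forall>u v. finvec u \<longrightarrow> finvec v \<longrightarrow> T (\<lambda>i. u i + v i) = (\<lambda>i. T u i + T v i)) \<and>
     (\<forall>c v. finvec v \<longrightarrow> T (\<lambda>i. c * v i) = (\<lambda>i. c * T v i))"

definition l2_bounded :: "operator \<Rightarrow> bool" where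
  "l2_bounded T \<longleftrightarrow> (\<exists>C\<ge>0. \<forall>v. finvec v \<longrightarrow> sqnorm (T v) \<le> C * sqnorm v)"

definition Dcomm :: "operator \<Rightarrow> operator" where
  "Dcomm T = (\<lambda>v i. Dop (T v) i - T (Dop v) i)"

definition lipschitz :: "operator \<Rightarrow> bool" where
  "lipschitz T \<longleftrightarrow> finvec_closed T \<and> fin_linear T \<and> l2_bounded T \<and> l2_bounded (Dcomm T)"

lemma l2_bounded_add:
  assumes "finvec_closed T" "finvec_closed S" "l2_bounded T" "l2_bounded S"
  shows "l2_bounded (\<lambda>v i. T v i + S v i)"
proof -
  obtain C1 where C1: "0 \<le> C1" "\<And>v. finvec v \<Longrightarrow> sqnorm (T v) \<le> C1 * sqnorm v"
    using assms(3) unfolding l2_bounded_def by blast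
  obtain C2 where C2: "0 \<le> C2" "\<And>v. finvec v \<Longrightarrow> sqnorm (S v) \<le> C2 * sqnorm v"
    using assms(4) unfolding l2_bounded_def by blast
  have "sqnorm (\<lambda>i. T v i + S v i) \<le> (2 * C1 + 2 * C2) * sqnorm v" if v: "finvec v" for v
  proof -
    have "sqnorm (\<lambda>i. T v i + S v i) \<le> 2 * sqnorm (T v) + 2 * sqnorm (S v)"
      using assms(1,2) v by (intro sqnorm_add_le) (auto simp: finvec_closed_def finite_supp_finvec)
    also have "\<dots> \<le> (2 * C1 + 2 * C2) * sqnorm v"
      using C1(2)[OF v] C2(2)[OF v] by (simp add: algebra_simps)
    finally show ?thesis .
  qed
  moreover have "0 \<le> 2 * C1 + 2 * C2" using C1 C2 by simp
  ultimately show ?thesis unfolding l2_bounded_def by blast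
qed

lemma l2_bounded_scale:
  assumes "finvec_closed T" "l2_bounded T"
  shows "l2_bounded (\<lambda>v i. c * T v i)"
proof -
  obtain C where C: "0 \<le> C" "\<And>v. finvec v \<Longrightarrow> sqnorm (T v) \<le> C * sqnorm v"
    using assms(2) unfolding l2_bounded_def by blast
  have "sqnorm (\<lambda>i. c * T v i) \<le> ((cmod c)\<^sup>2 * C) * sqnorm v" if v: "finvec v" for v
    using assms(1) v C(2)[OF v]
    by (simp add: sqnorm_scale finvec_closed_def finite_supp_finvec mult_left_mono mult.assoc)
  then show ?thesis unfolding l2_bounded_def using C(1) by (intro exI[of _ "(cmod c)\<^sup>2 * C"]) simp
qed

lemma l2_bounded_comp:
  assumes "finvec_closed S" "l2_bounded T" "l2_bounded S"
  shows "l2_bounded (\<lambda>v. T (S v))"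
proof -
  obtain C1 where C1: "0 \<le> C1" "\<And>v. finvec v \<Longrightarrow> sqnorm (T v) \<le> C1 * sqnorm v"
    using assms(2) unfolding l2_bounded_def by blast
  obtain C2 where C2: "0 \<le> C2" "\<And>v. finvec v \<Longrightarrow> sqnorm (S v) \<le> C2 * sqnorm v"
    using assms(3) unfolding l2_bounded_def by blast
  have "sqnorm (T (S v)) \<le> (C1 * C2) * sqnorm v" if v: "finvec v" for v
  proof -
    have "sqnorm (T (S v)) \<le> C1 * sqnorm (S v)"
      using C1(2) assms(1) v by (simp add: finvec_closed_def)
    also have "\<dots> \<le> C1 * (C2 * sqnorm v)" using C2(2)[OF v] C1(1) by (rule mult_left_mono)
    finally show ?thesis by (simp add: mult.assoc)
  qed
  then show ?thesis unfolding l2_bounded_def using C1(1) C2(1) by (intro exI[of _ "C1 * C2"]) simp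
qed

lemma finvec_closed_Dcomm: "finvec_closed T \<Longrightarrow> finvec_closed (Dcomm T)"
  unfolding finvec_closed_def Dcomm_def by (simp add: finvec_diff finvec_Dop)

lemma fin_linear_add:
  "fin_linear T \<Longrightarrow> finvec u \<Longrightarrow> finvec v \<Longrightarrow> T (\<lambda>i. u i + v i) = (\<lambda>i. T u i + T v i)"
  by (simp add: fin_linear_def)

lemma fin_linear_diff:
  assumes "fin_linear T" "finvec u" "finvec v"
  shows "T (\<lambda>i. u i - v i) = (\<lambda>i. T u i - T v i)"
proof -
  have "T u = T (\<lambda>i. v i + (u i - v i))" by simp
  also have "\<dots> = (\<lambda>i. T v i + T (\<lambda>i. u i - v i) i)"
    using assms by (intro fin_linear_add) (auto intro: finvec_diff)
  finally show ?thesis by (simp add: fun_eq_iff)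
qed

lemma lipschitz_id: "lipschitz (\<lambda>v. v)"
proof -
  have "l2_bounded (\<lambda>v. v)" "Dcomm (\<lambda>v. v) = (\<lambda>v i. 0)"
    by (auto simp: l2_bounded_def Dcomm_def intro: exI[of _ 1])
  moreover have "l2_bounded (\<lambda>v i. 0)"
    by (auto simp: l2_bounded_def sqnorm_def supp_def sqnorm_nonneg)
  ultimately show ?thesis by (simp add: lipschitz_def finvec_closed_def fin_linear_def)
qed

lemma lipschitz_add:
  assumes T: "lipschitz T" and S: "lipschitz S"
  shows "lipschitz (\<lambda>v i. T v i + S v i)"
proof -
  have Dcomm_add: "Dcomm (\<lambda>v i. T v i + S v i) = (\<lambda>v i. Dcomm T v i + Dcomm S v i)"
    by (simp add: Dcomm_def fun_eq_iff Dop_add)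
  have "l2_bounded (\<lambda>v i. Dcomm T v i + Dcomm S v i)"
    using T S by (intro l2_bounded_add) (auto simp: lipschitz_def finvec_closed_Dcomm)
  moreover have "l2_bounded (\<lambda>v i. T v i + S v i)"
    using T S by (intro l2_bounded_add) (auto simp: lipschitz_def)
  moreover have "finvec_closed (\<lambda>v i. T v i + S v i)"
    using T S by (simp add: lipschitz_def finvec_closed_def finvec_add)
  moreover have "fin_linear (\<lambda>v i. T v i + S v i)"
    using T S unfolding lipschitz_def fin_linear_def by (simp add: fun_eq_iff add_ac distrib_left)
  ultimately show ?thesis unfolding lipschitz_def Dcomm_add by blast
qed

lemma lipschitz_scale:
  assumes T: "lipschitz T"
  shows "lipschitz (\<lambda>v i. c * T v i)"
proof -
  have Dcomm_scale: "Dcomm (\<lambda>v i. c * T v i) = (\<lambda>v i. c * Dcomm T v i)"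
    by (simp add: Dcomm_def fun_eq_iff Dop_scale algebra_simps)
  have "l2_bounded (\<lambda>v i. c * Dcomm T v i)"
    using T by (intro l2_bounded_scale) (auto simp: lipschitz_def finvec_closed_Dcomm)
  moreover have "l2_bounded (\<lambda>v i. c * T v i)"
    using T by (intro l2_bounded_scale) (auto simp: lipschitz_def)
  moreover have "finvec_closed (\<lambda>v i. c * T v i)"
    using T by (simp add: lipschitz_def finvec_closed_def finvec_scale)
  moreover have "fin_linear (\<lambda>v i. c * T v i)"
    using T unfolding lipschitz_def fin_linear_def by (simp add: fun_eq_iff distrib_left mult.left_commute)
  ultimately show ?thesis unfolding lipschitz_def Dcomm_scale by blast
qed

lemma Dcomm_comp:
  assumes "fin_linear T" "finvec_closed S" "finvec v"
  shows "Dcomm (\<lambda>v. T (S v)) v = (\<lambda>i. Dcomm T (S v) i + T (Dcomm S v) i)"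
proof -
  have "T (Dcomm S v) = (\<lambda>i. T (Dop (S v)) i - T (S (Dop v)) i)"
    unfolding Dcomm_def
    using assms finvec_Dop by (intro fin_linear_diff) (auto simp: finvec_closed_def)
  then show ?thesis by (simp add: Dcomm_def fun_eq_iff)
qed

lemma finvec_closed_comp: "finvec_closed T \<Longrightarrow> finvec_closed S \<Longrightarrow> finvec_closed (\<lambda>v. T (S v))"
  by (simp add: finvec_closed_def)

lemma lipschitz_comp:
  assumes T: "lipschitz T" and S: "lipschitz S"
  shows "lipschitz (\<lambda>v. T (S v))"
proof -
  have closed: "finvec_closed T" "finvec_closed S"
    using T S by (simp_all only: lipschitz_def)
  have closed_Dcomm: "finvec_closed (Dcomm T)" "finvec_closed (Dcomm S)"
    by (rule finvec_closed_Dcomm[OF closed(1)], rule finvec_closed_Dcomm[OF closed(2)])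
  have "l2_bounded (\<lambda>v i. Dcomm T (S v) i + T (Dcomm S v) i)"
  proof (rule l2_bounded_add)
    show "finvec_closed (\<lambda>v. Dcomm T (S v))" "finvec_closed (\<lambda>v. T (Dcomm S v))"
      using closed closed_Dcomm by (simp_all add: finvec_closed_comp)
    show "l2_bounded (\<lambda>v. Dcomm T (S v))" "l2_bounded (\<lambda>v. T (Dcomm S v))"
      using T S closed closed_Dcomm by (simp_all add: l2_bounded_comp lipschitz_def)
  qed
  then have "l2_bounded (Dcomm (\<lambda>v. T (S v)))"
    using Dcomm_comp[of T S] T closed(2) unfolding l2_bounded_def lipschitz_def by metis
  moreover have "l2_bounded (\<lambda>v. T (S v))"
    using T S closed(2) by (simp add: l2_bounded_comp lipschitz_def)
  moreover have "finvec_closed (\<lambda>v. T (S v))" "fin_linear (\<lambda>v. T (S v))"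
    using T S unfolding lipschitz_def fin_linear_def finvec_closed_def by simp_all
  ultimately show ?thesis unfolding lipschitz_def by blast
qed

lemma bounded_fin_Dcomm:
  assumes "lipschitz T"
  shows "bounded_fin (Dcomm T)"
proof -
  obtain C where C: "0 \<le> C" "\<And>v. finvec v \<Longrightarrow> sqnorm (Dcomm T v) \<le> C * sqnorm v"
    using assms unfolding lipschitz_def l2_bounded_def by blast
  have "(\<lambda>i. (cmod (Dcomm T v i))\<^sup>2) summable_on UNIV \<and>
        (\<Sum>\<^sub>\<infinity>i. (cmod (Dcomm T v i))\<^sup>2) \<le> (sqrt C)\<^sup>2 * (\<Sum>i\<in>{i. v i \<noteq> 0}. (cmod (v i))\<^sup>2)"
    if v: "finvec v" for v
  proof -
    let ?w = "Dcomm T v"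
    have fin: "finite (supp ?w)"
      using assms v finvec_closed_Dcomm by (auto simp: lipschitz_def finvec_closed_def finite_supp_finvec)
    have "(\<lambda>i. (cmod (?w i))\<^sup>2) summable_on supp ?w" using fin by (rule summable_on_finite)
    then have "(\<lambda>i. (cmod (?w i))\<^sup>2) summable_on UNIV"
      by (rule summable_on_cong_neutral[THEN iffD1, rotated -1]) (auto simp: supp_def)
    moreover have "(\<Sum>\<^sub>\<infinity>i. (cmod (?w i))\<^sup>2) = (\<Sum>\<^sub>\<infinity>i\<in>supp ?w. (cmod (?w i))\<^sup>2)"
      by (rule infsum_cong_neutral) (auto simp: supp_def)
    then have "(\<Sum>\<^sub>\<infinity>i. (cmod (?w i))\<^sup>2) = sqnorm ?w"
      using fin by (simp add: sqnorm_def)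
    ultimately show ?thesis using C v by (simp add: sqnorm_def supp_def sum_nonneg)
  qed
  then show ?thesis unfolding bounded_fin_def by blast
qed

section \<open>Banded matrices\<close>

definition valid_idx :: "idx \<Rightarrow> bool" where
  "valid_idx i \<longleftrightarrow> valid_lm (fst (snd i)) (snd (snd i))"

lemma valid_idx_flip [simp]: "valid_idx (flip i) = valid_idx i"
  by (simp add: valid_idx_def)

definition banded :: "(idx \<Rightarrow> idx \<Rightarrow> complex) \<Rightarrow> real \<Rightarrow> nat \<Rightarrow> bool" where
  "banded M K N \<longleftrightarrow> (\<forall>i j. cmod (M i j) \<le> K)
     \<and> (\<forall>i. finite {j. M i j \<noteq> 0} \<and> card {j. M i j \<noteq> 0} \<le> N)
     \<and> (\<forall>j. finite {i. M i j \<noteq> 0} \<and> card {i. M i j \<noteq> 0} \<le> N)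
     \<and> (\<forall>i j. M i j \<noteq> 0 \<longrightarrow> valid_idx i \<and> valid_idx j)"

lemma banded_entry: "banded M K N \<Longrightarrow> cmod (M i j) \<le> K"
  and banded_row: "banded M K N \<Longrightarrow> finite {j. M i j \<noteq> 0} \<and> card {j. M i j \<noteq> 0} \<le> N"
  and banded_col: "banded M K N \<Longrightarrow> finite {i. M i j \<noteq> 0} \<and> card {i. M i j \<noteq> 0} \<le> N"
  and banded_valid: "banded M K N \<Longrightarrow> M i j \<noteq> 0 \<Longrightarrow> valid_idx i \<and> valid_idx j"
  unfolding banded_def by blast+

definition adjoint :: "(idx \<Rightarrow> idx \<Rightarrow> complex) \<Rightarrow> idx \<Rightarrow> idx \<Rightarrow> complex" where
  "adjoint M i j = cnj (M j i)"

lemma banded_adjoint: "banded M K N \<Longrightarrow> banded (adjoint M) K N"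
  unfolding banded_def adjoint_def by (simp add: complex_cnj_zero_iff)

lemma mat_op_eq_sum:
  assumes "finite A" and "supp v \<subseteq> A"
  shows "mat_op M v i = (\<Sum>j\<in>A. M i j * v j)"
  unfolding mat_op_def by (rule sum.mono_neutral_left) (use assms in \<open>auto simp: supp_def\<close>)

lemma supp_mat_op: "supp (mat_op M v) \<subseteq> (\<Union>j\<in>supp v. {i. M i j \<noteq> 0})"
proof
  fix i assume "i \<in> supp (mat_op M v)"
  then have "(\<Sum>j\<in>supp v. M i j * v j) \<noteq> 0" by (simp add: mat_op_def supp_def)
  then obtain j where "j \<in> supp v" "M i j * v j \<noteq> 0" by (meson sum.neutral)
  then show "i \<in> (\<Union>j\<in>supp v. {i. M i j \<noteq> 0})" by auto
qed

lemma finvec_closed_mat_op: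
  assumes M: "banded M K N"
  shows "finvec_closed (mat_op M)"
  unfolding finvec_closed_def
proof (intro allI impI)
  fix v assume v: "finvec v"
  have "finite (\<Union>j\<in>supp v. {i. M i j \<noteq> 0})"
    using banded_col[OF M] finite_supp_finvec[OF v] by blast
  then have "finite (supp (mat_op M v))" using supp_mat_op finite_subset by blast
  moreover have "valid_idx i" if i: "i \<in> supp (mat_op M v)" for i
  proof -
    obtain j where "M i j \<noteq> 0" using i supp_mat_op by blast
    then show ?thesis using banded_valid[OF M] by blast
  qed
  ultimately show "finvec (mat_op M v)"
    unfolding finvec_def by (auto simp: supp_def valid_idx_def)
qed

lemma fin_linear_mat_op: "fin_linear (mat_op M)"
  unfolding fin_linear_def
proof (intro conjI allI impI)
  fix u v assume "finvec u" "finvec v"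
  then have A: "finite (supp u \<union> supp v)" by (simp add: finite_supp_finvec)
  have "supp (\<lambda>i. u i + v i) \<subseteq> supp u \<union> supp v" by (auto simp: supp_def)
  then show "mat_op M (\<lambda>i. u i + v i) = (\<lambda>i. mat_op M u i + mat_op M v i)"
    by (simp add: fun_eq_iff mat_op_eq_sum[OF A] distrib_left sum.distrib)
next
  fix c v assume "finvec v"
  then have A: "finite (supp v)" by (simp add: finite_supp_finvec)
  have "supp (\<lambda>i. c * v i) \<subseteq> supp v" by (auto simp: supp_def)
  then show "mat_op M (\<lambda>i. c * v i) = (\<lambda>i. c * mat_op M v i)"
    by (simp add: fun_eq_iff mat_op_eq_sum[OF A] sum_distrib_left mult.left_commute)
qed

lemma mat_op_row_bound:
  assumes M: "banded M K N" and S: "finite S" "supp v \<subseteq> S"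
  shows "(cmod (mat_op M v i))\<^sup>2 \<le> N * K\<^sup>2 * (\<Sum>j\<in>{j\<in>S. M i j \<noteq> 0}. (cmod (v j))\<^sup>2)"
proof -
  let ?J = "{j\<in>S. M i j \<noteq> 0}"
  have "mat_op M v i = (\<Sum>j\<in>?J. M i j * v j)"
    using S by (simp add: mat_op_eq_sum[OF S] sum.inter_filter[symmetric] sum.mono_neutral_right)
  then have "cmod (mat_op M v i) \<le> (\<Sum>j\<in>?J. cmod (M i j) * cmod (v j))"
    by (simp add: norm_sum flip: norm_mult)
  also have "\<dots> \<le> (\<Sum>j\<in>?J. K * cmod (v j))"
    by (intro sum_mono mult_right_mono banded_entry[OF M]) simp
  finally have "(cmod (mat_op M v i))\<^sup>2 \<le> (\<Sum>j\<in>?J. K * cmod (v j))\<^sup>2"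
    by (simp add: power_mono)
  also have "\<dots> \<le> card ?J * (\<Sum>j\<in>?J. (K * cmod (v j))\<^sup>2)"
    using Cauchy_Schwarz_ineq_sum[of "\<lambda>_. 1" "\<lambda>j. K * cmod (v j)" ?J] by simp
  also have "\<dots> \<le> N * (\<Sum>j\<in>?J. (K * cmod (v j))\<^sup>2)"
  proof (rule mult_right_mono)
    have "card ?J \<le> card {j. M i j \<noteq> 0}" using banded_row[OF M] by (intro card_mono) auto
    also have "\<dots> \<le> N" using banded_row[OF M] by blast
    finally show "real (card ?J) \<le> N" by simp
  qed (simp add: sum_nonneg)
  finally show ?thesis by (simp add: power_mult_distrib sum_distrib_left mult.assoc)
qed

text \<open>Schur test.\<close>
lemma l2_bounded_mat_op:
  assumes M: "banded M K N"
  shows "l2_bounded (mat_op M)"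
  unfolding l2_bounded_def
proof (intro exI[of _ "(N * K)\<^sup>2"] conjI allI impI)
  fix v assume v: "finvec v"
  define S where "S = supp v"
  define R where "R = (\<Union>j\<in>S. {i. M i j \<noteq> 0})"
  have S: "finite S" using v finite_supp_finvec S_def by auto
  have R: "finite R" using banded_col[OF M] S by (auto simp: R_def)
  have "sqnorm (mat_op M v) = (\<Sum>i\<in>R. (cmod (mat_op M v i))\<^sup>2)"
    using R supp_mat_op[of M v] by (intro sqnorm_eq_sum) (auto simp: R_def S_def)
  also have "\<dots> \<le> (\<Sum>i\<in>R. N * K\<^sup>2 * (\<Sum>j\<in>{j\<in>S. M i j \<noteq> 0}. (cmod (v j))\<^sup>2))"
    using mat_op_row_bound[OF M S] S_def by (intro sum_mono) auto
  also have "\<dots> = N * K\<^sup>2 * (\<Sum>j\<in>S. \<Sum>i\<in>{i\<in>R. M i j \<noteq> 0}. (cmod (v j))\<^sup>2)"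
    by (simp add: sum_distrib_left sum.swap_restrict[OF R S] mult_ac)
  also have "\<dots> \<le> N * K\<^sup>2 * (\<Sum>j\<in>S. N * (cmod (v j))\<^sup>2)"
  proof (intro mult_left_mono sum_mono)
    fix j
    have "card {i\<in>R. M i j \<noteq> 0} \<le> card {i. M i j \<noteq> 0}" using banded_col[OF M] by (intro card_mono) auto
    also have "\<dots> \<le> N" using banded_col[OF M] by blast
    finally show "(\<Sum>i\<in>{i\<in>R. M i j \<noteq> 0}. (cmod (v j))\<^sup>2) \<le> N * (cmod (v j))\<^sup>2"
      by (simp add: mult_right_mono)
  qed simp
  also have "\<dots> = (N * K)\<^sup>2 * sqnorm v"
    by (simp add: sqnorm_def S_def sum_distrib_left power2_eq_square mult_ac)
  finally show "sqnorm (mat_op M v) \<le> (N * K)\<^sup>2 * sqnorm v" .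
qed simp

definition Dcomm_matrix :: "(idx \<Rightarrow> idx \<Rightarrow> complex) \<Rightarrow> idx \<Rightarrow> idx \<Rightarrow> complex" where
  "Dcomm_matrix M i j =
     complex_of_real (weight i) * M (flip i) j - M i (flip j) * complex_of_real (weight j)"

lemma Dcomm_mat_op:
  assumes v: "finvec v"
  shows "Dcomm (mat_op M) v = mat_op (Dcomm_matrix M) v"
proof
  fix i
  define S where "S = supp v"
  have S: "finite S" using v finite_supp_finvec S_def by auto
  have "mat_op M (Dop v) i = (\<Sum>j\<in>flip ` S. M i j * Dop v j)"
    using S supp_Dop[of v] by (intro mat_op_eq_sum) (auto simp: S_def)
  also have "\<dots> = (\<Sum>j\<in>S. M i (flip j) * (complex_of_real (weight j) * v j))"
    by (simp add: sum.reindex inj_on_subset[OF inj_flip] Dop_apply)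
  finally show "Dcomm (mat_op M) v i = mat_op (Dcomm_matrix M) v i"
    by (simp add: Dcomm_def Dcomm_matrix_def Dop_apply mat_op_eq_sum[OF S] S_def
        sum_distrib_left sum_subtractf algebra_simps)
qed

lemma Dcomm_matrix_adjoint: "Dcomm_matrix (adjoint M) i j = - cnj (Dcomm_matrix M j i)"
  by (simp add: Dcomm_matrix_def adjoint_def algebra_simps)

lemma Dcomm_matrix_of_real:
  "Dcomm_matrix (\<lambda>i j. complex_of_real (c i j)) i j =
     complex_of_real (weight i * c (flip i) j - c i (flip j) * weight j)"
  by (simp add: Dcomm_matrix_def)

lemma Dcomm_matrix_row:
  assumes M: "banded M K N"
  shows "finite {j. Dcomm_matrix M i j \<noteq> 0} \<and> card {j. Dcomm_matrix M i j \<noteq> 0} \<le> 2 * N"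
proof -
  let ?A = "{j. M (flip i) j \<noteq> 0}" and ?B = "flip ` {j. M i j \<noteq> 0}"
  have sub: "{j. Dcomm_matrix M i j \<noteq> 0} \<subseteq> ?A \<union> ?B"
  proof
    fix j assume "j \<in> {j. Dcomm_matrix M i j \<noteq> 0}"
    then have "M (flip i) j \<noteq> 0 \<or> M i (flip j) \<noteq> 0" by (auto simp: Dcomm_matrix_def)
    then show "j \<in> ?A \<union> ?B" using image_eqI[of j flip "flip j"] by auto
  qed
  have A: "finite ?A" "card ?A \<le> N" using banded_row[OF M] by auto
  have B: "finite ?B" "card ?B \<le> N"
    using banded_row[OF M, of i] card_image_le[of "{j. M i j \<noteq> 0}" flip] by auto
  have "card (?A \<union> ?B) \<le> 2 * N" using card_Un_le[of ?A ?B] A B by linarith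
  then show ?thesis using A B sub card_mono[OF _ sub] finite_subset by fastforce
qed

lemma banded_Dcomm_matrix:
  assumes M: "banded M K N" and bound: "\<And>i j. cmod (Dcomm_matrix M i j) \<le> K'"
  shows "banded (Dcomm_matrix M) K' (2 * N)"
  unfolding banded_def
proof (intro conjI allI impI)
  fix i j
  show "cmod (Dcomm_matrix M i j) \<le> K'" by (rule bound)
  show "finite {j. Dcomm_matrix M i j \<noteq> 0}" "card {j. Dcomm_matrix M i j \<noteq> 0} \<le> 2 * N"
    using Dcomm_matrix_row[OF M] by blast+
  have "{i. Dcomm_matrix M i j \<noteq> 0} = {i. Dcomm_matrix (adjoint M) j i \<noteq> 0}"
    by (simp add: Dcomm_matrix_adjoint)
  then show "finite {i. Dcomm_matrix M i j \<noteq> 0}" "card {i. Dcomm_matrix M i j \<noteq> 0} \<le> 2 * N"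
    using Dcomm_matrix_row[OF banded_adjoint[OF M]] by simp_all
  assume "Dcomm_matrix M i j \<noteq> 0"
  then have "M (flip i) j \<noteq> 0 \<or> M i (flip j) \<noteq> 0" by (auto simp: Dcomm_matrix_def)
  then show "valid_idx i" "valid_idx j" using banded_valid[OF M] valid_idx_flip by metis+
qed

lemma lipschitz_mat_op:
  assumes M: "banded M K N" and bound: "\<And>i j. cmod (Dcomm_matrix M i j) \<le> K'"
  shows "lipschitz (mat_op M)"
proof -
  have "l2_bounded (mat_op (Dcomm_matrix M))"
    by (rule l2_bounded_mat_op[OF banded_Dcomm_matrix[OF M bound]])
  then have "l2_bounded (Dcomm (mat_op M))"
    unfolding l2_bounded_def using Dcomm_mat_op by metis
  then show ?thesis
    using M by (simp add: lipschitz_def finvec_closed_mat_op fin_linear_mat_op l2_bounded_mat_op)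
qed

lemma lipschitz_mat_op_adjoint:
  assumes M: "banded M K N" and bound: "\<And>i j. cmod (Dcomm_matrix M i j) \<le> K'"
  shows "lipschitz (mat_op (adjoint M))"
  using bound by (intro lipschitz_mat_op[OF banded_adjoint[OF M]]) (simp add: Dcomm_matrix_adjoint)

lemma valid_lm_bounds:
  assumes "valid_lm l m"
  shows "1/2 \<le> l" "-l \<le> m" "m \<le> l" "m = l \<or> m \<le> l - 1"
proof -
  obtain z where z: "m - l = of_int z" using assms unfolding valid_lm_def by (auto elim: Ints_cases)
  show "1/2 \<le> l" "-l \<le> m" "m \<le> l" using assms unfolding valid_lm_def by auto
  then have "z \<le> 0" using z by linarith
  then consider "z = 0" | "z \<le> -1" by linarith
  then show "m = l \<or> m \<le> l - 1"
  proof cases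
    case 1
    then show ?thesis using z by simp
  next
    case 2
    then have "real_of_int z \<le> -1" by simp
    then show ?thesis using z by linarith
  qed
qed

lemma valid_lm_half: "valid_lm (1/2) (1/2)"
  unfolding valid_lm_def by (auto intro: exI[of _ 0])

text \<open>Both generators have this shape on |l,m>_\<plusminus>: they move l by 0, +1 or -1 (and m by
  d1, d2, d3 accordingly), and only the l-preserving coefficient depends on the sign \<plusminus>.\<close>
definition ladder ::
  "real \<Rightarrow> real \<Rightarrow> real \<Rightarrow> (real \<Rightarrow> real \<Rightarrow> real) \<Rightarrow> (real \<Rightarrow> real \<Rightarrow> real) \<Rightarrow>
   (real \<Rightarrow> real \<Rightarrow> real) \<Rightarrow> idx \<Rightarrow> idx \<Rightarrow> real" where
  "ladder d1 d2 d3 P Q R i j = (case i of (s', l', m') \<Rightarrow> case j of (s, l, m) \<Rightarrow>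
     if s' = s \<and> valid_lm l m \<and> valid_lm l' m' then
       (if l' = l \<and> m' = m + d1 then sgnb s * P l m
        else if l' = l + 1 \<and> m' = m + d2 then Q l m
        else if l' = l - 1 \<and> m' = m + d3 then R l m else 0)
     else 0)"

text \<open>The weight l + 1/2 on P: D anticommutes with the sign-dependent part, so the
  commutator doubles it and multiplies it by the eigenvalue l + 1/2 of |D|.\<close>
definition ladder_bounded ::
  "(real \<Rightarrow> real \<Rightarrow> real) \<Rightarrow> (real \<Rightarrow> real \<Rightarrow> real) \<Rightarrow> (real \<Rightarrow> real \<Rightarrow> real) \<Rightarrow>
   real \<Rightarrow> bool" where
  "ladder_bounded P Q R K \<longleftrightarrow> (\<forall>l m. valid_lm l m \<longrightarrow>
     (l + 1/2) * \<bar>P l m\<bar> \<le> K \<and> \<bar>Q l m\<bar> \<le> K \<and> \<bar>R l m\<bar> \<le> K)"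

lemma ladder_bounded_nonneg: "ladder_bounded P Q R K \<Longrightarrow> 0 \<le> K"
  unfolding ladder_bounded_def using valid_lm_half by fastforce

lemma ladder_bounded_P:
  assumes K: "ladder_bounded P Q R K" and v: "valid_lm l m"
  shows "\<bar>P l m\<bar> \<le> K"
proof -
  have "1 * \<bar>P l m\<bar> \<le> (l + 1/2) * \<bar>P l m\<bar>"
    using valid_lm_bounds(1)[OF v] by (intro mult_right_mono) auto
  also have "\<dots> \<le> K" using K v by (simp add: ladder_bounded_def)
  finally show ?thesis by simp
qed

lemma sgnb_cases: "sgnb s = 1 \<or> sgnb s = -1"
  by (simp add: sgnb_def)

lemma ladder_nonzero:
  assumes "ladder d1 d2 d3 P Q R (s', l', m') (s, l, m) \<noteq> 0"
  shows "s' = s \<and> valid_lm l m \<and> valid_lm l' m' \<and>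
    ((l', m') = (l, m + d1) \<or> (l', m') = (l + 1, m + d2) \<or> (l', m') = (l - 1, m + d3))"
  using assms by (auto simp: ladder_def split: if_splits)

lemma ladder_entry_bound:
  assumes K: "ladder_bounded P Q R K"
  shows "\<bar>ladder d1 d2 d3 P Q R i j\<bar> \<le> K"
proof -
  obtain s' l' m' s l m where ij: "i = (s', l', m')" "j = (s, l, m)" by (cases i, cases j) auto
  have "\<bar>sgnb s * P l m\<bar> \<le> K" if "valid_lm l m"
    using ladder_bounded_P[OF K that] sgnb_cases[of s] by (auto simp: abs_mult)
  then show ?thesis
    using K ladder_bounded_nonneg[OF K] by (auto simp: ij ladder_def ladder_bounded_def)
qed

lemma Dcomm_ladder_bound:
  assumes K: "ladder_bounded P Q R K"
  shows "cmod (Dcomm_matrix (\<lambda>i j. complex_of_real (ladder d1 d2 d3 P Q R i j)) i j) \<le> 2 * K"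
proof -
  obtain s' l' m' s l m where ij: "i = (s', l', m')" "j = (s, l, m)" by (cases i, cases j) auto
  have K0: "0 \<le> K" by (rule ladder_bounded_nonneg[OF K])
  have bounds: "(l + 1/2) * \<bar>P l m\<bar> \<le> K" "\<bar>Q l m\<bar> \<le> K" "\<bar>R l m\<bar> \<le> K" if "valid_lm l m"
    using K that by (simp_all add: ladder_bounded_def)
  let ?C = "weight i * ladder d1 d2 d3 P Q R (flip i) j - ladder d1 d2 d3 P Q R i (flip j) * weight j"
  have "\<bar>?C\<bar> \<le> 2 * K"
  proof -
    consider "l' = l" | "l' = l + 1" | "l' = l - 1" | "l' \<noteq> l" "l' \<noteq> l + 1" "l' \<noteq> l - 1" by blast
    then show ?thesis
    proof cases
      case 1
      then have "?C = (if s' \<noteq> s \<and> valid_lm l m \<and> valid_lm l' m' \<and> m' = m + d1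
          then 2 * sgnb s * ((l + 1/2) * P l m) else 0)"
        by (auto simp: ij ladder_def flip_def weight_def sgnb_def algebra_simps)
      moreover have "\<bar>2 * sgnb s * ((l + 1/2) * P l m)\<bar> = 2 * ((l + 1/2) * \<bar>P l m\<bar>)" if "valid_lm l m"
        using sgnb_cases[of s] valid_lm_bounds(1)[OF that] by (auto simp: abs_mult)
      ultimately show ?thesis using bounds K0 by auto
    next
      case 2
      then have "?C = (if s' \<noteq> s \<and> valid_lm l m \<and> valid_lm l' m' \<and> m' = m + d2 then Q l m else 0)"
        by (auto simp: ij ladder_def flip_def weight_def algebra_simps)
      then show ?thesis using bounds K0 by auto
    next
      case 3
      then have "?C = (if s' \<noteq> s \<and> valid_lm l m \<and> valid_lm l' m' \<and> m' = m + d3 then - R l m else 0)"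
        by (auto simp: ij ladder_def flip_def weight_def algebra_simps)
      then show ?thesis using bounds K0 by auto
    next
      case 4
      then have "ladder d1 d2 d3 P Q R (s1, l', m') (s2, l, m) = 0" for s1 s2
        by (simp add: ladder_def)
      then show ?thesis using K0 by (simp add: ij flip_def)
    qed
  qed
  then show ?thesis unfolding Dcomm_matrix_of_real norm_of_real .
qed

lemma banded_ladder:
  assumes K: "ladder_bounded P Q R K"
  shows "banded (\<lambda>i j. complex_of_real (ladder d1 d2 d3 P Q R i j)) K 3"
  unfolding banded_def of_real_eq_0_iff norm_of_real
proof (intro conjI allI impI)
  fix i j :: idx
  show "\<bar>ladder d1 d2 d3 P Q R i j\<bar> \<le> K" by (rule ladder_entry_bound[OF K])
  obtain s' l' m' where i: "i = (s', l', m')" by (cases i) auto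
  obtain s l m where j: "j = (s, l, m)" by (cases j) auto
  let ?row = "{(s', l', m' - d1), (s', l' - 1, m' - d2), (s', l' + 1, m' - d3)}"
  have "{j. ladder d1 d2 d3 P Q R i j \<noteq> 0} \<subseteq> ?row"
  proof
    fix j assume "j \<in> {j. ladder d1 d2 d3 P Q R i j \<noteq> 0}"
    moreover obtain t k n where "j = (t, k, n)" by (cases j) auto
    ultimately show "j \<in> ?row" using ladder_nonzero[of d1 d2 d3 P Q R s' l' m' t k n] by (auto simp: i)
  qed
  moreover have "card ?row \<le> 3" by (simp add: card_insert_if)
  ultimately show "finite {j. ladder d1 d2 d3 P Q R i j \<noteq> 0}"
    "card {j. ladder d1 d2 d3 P Q R i j \<noteq> 0} \<le> 3"
    by (auto dest: finite_subset card_mono[rotated])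
  let ?col = "{(s, l, m + d1), (s, l + 1, m + d2), (s, l - 1, m + d3)}"
  have "{i. ladder d1 d2 d3 P Q R i j \<noteq> 0} \<subseteq> ?col"
  proof
    fix i assume "i \<in> {i. ladder d1 d2 d3 P Q R i j \<noteq> 0}"
    moreover obtain t k n where "i = (t, k, n)" by (cases i) auto
    ultimately show "i \<in> ?col" using ladder_nonzero[of d1 d2 d3 P Q R t k n s l m] by (auto simp: j)
  qed
  moreover have "card ?col \<le> 3" by (simp add: card_insert_if)
  ultimately show "finite {i. ladder d1 d2 d3 P Q R i j \<noteq> 0}"
    "card {i. ladder d1 d2 d3 P Q R i j \<noteq> 0} \<le> 3"
    by (auto dest: finite_subset card_mono[rotated])
  assume "ladder d1 d2 d3 P Q R i j \<noteq> 0"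
  then show "valid_idx i" "valid_idx j" using ladder_nonzero by (auto simp: i j valid_idx_def)
qed

lemma lipschitz_ladder:
  assumes "ladder_bounded P Q R K"
  shows "lipschitz (mat_op (\<lambda>i j. complex_of_real (ladder d1 d2 d3 P Q R i j)))"
    and "lipschitz (mat_op (adjoint (\<lambda>i j. complex_of_real (ladder d1 d2 d3 P Q R i j))))"
  using banded_ladder[OF assms] Dcomm_ladder_bound[OF assms]
  by (rule lipschitz_mat_op, rule lipschitz_mat_op_adjoint)

definition a_same :: "real \<Rightarrow> real \<Rightarrow> real \<Rightarrow> real" where
  "a_same q l m = (1 + q\<^sup>2) * q powr (m - 1/2) / (qnum q (2*l) * qnum q (2*l+2))
     * sqrt (qnum q (l+m+1) * qnum q (l-m))"

definition a_up :: "real \<Rightarrow> real \<Rightarrow> real \<Rightarrow> real" where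
  "a_up q l m = q powr (m - l - 1/2) / qnum q (2*l+2) * sqrt (qnum q (l+m+1) * qnum q (l+m+2))"

definition a_down :: "real \<Rightarrow> real \<Rightarrow> real \<Rightarrow> real" where
  "a_down q l m = - (q powr (m + l + 1/2) / qnum q (2*l) * sqrt (qnum q (l-m) * qnum q (l-m-1)))"

definition b_same :: "real \<Rightarrow> real \<Rightarrow> real \<Rightarrow> real" where
  "b_same q l m = (qnum q (l-m+1) * qnum q (l+m) - q\<^sup>2 * qnum q (l-m) * qnum q (l+m+1))
     / (qnum q (2*l) * qnum q (2*l+2))"

definition b_up :: "real \<Rightarrow> real \<Rightarrow> real \<Rightarrow> real" where
  "b_up q l m = - (q powr (m + 1) / qnum q (2*l+2) * sqrt (qnum q (l-m+1) * qnum q (l+m+1)))"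

definition b_down :: "real \<Rightarrow> real \<Rightarrow> real \<Rightarrow> real" where
  "b_down q l m = - (q powr (m + 1) / qnum q (2*l) * sqrt (qnum q (l-m) * qnum q (l+m)))"

lemma piA_ladder: "piA q = (\<lambda>i j. complex_of_real (ladder 1 1 0 (a_same q) (a_up q) (a_down q) i j))"
  by (auto simp: fun_eq_iff piA_def coef_a_def ladder_def a_same_def a_up_def a_down_def mult.assoc)

lemma piB_ladder: "piB q = (\<lambda>i j. complex_of_real (ladder 0 0 0 (b_same q) (b_up q) (b_down q) i j))"
  by (auto simp: fun_eq_iff piB_def coef_b_def ladder_def b_same_def b_up_def b_down_def)

lemma piAstar_adjoint: "piAstar q = adjoint (piA q)"
  by (simp add: fun_eq_iff piAstar_def adjoint_def)

lemma lipschitz_piAlg: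
  assumes a: "ladder_bounded (a_same q) (a_up q) (a_down q) Ka"
    and b: "ladder_bounded (b_same q) (b_up q) (b_down q) Kb"
    and T: "T \<in> piAlg q"
  shows "lipschitz T"
  using T
proof (induction rule: piAlg.induct)
  case unit
  show ?case by (rule lipschitz_id)
next
  case gen_a
  show ?case unfolding piA_ladder by (rule lipschitz_ladder(1)[OF a])
next
  case gen_astar
  show ?case unfolding piAstar_adjoint piA_ladder by (rule lipschitz_ladder(2)[OF a])
next
  case gen_b
  show ?case unfolding piB_ladder by (rule lipschitz_ladder(1)[OF b])
next
  case (add T S)
  show ?case by (rule lipschitz_add[OF add.IH])
next
  case (smult T c)
  show ?case by (rule lipschitz_scale[OF smult.IH])
next
  case (mult T S)
  show ?case by (rule lipschitz_comp[OF mult.IH])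
qed

section \<open>Coefficient estimates\<close>

lemma sqrt_mult_div_le_1:
  assumes "0 \<le> x" "0 \<le> y" "0 < d" "x + y \<le> 2 * d"
  shows "sqrt (x * y) / d \<le> 1"
  using arith_geo_mean_sqrt[of x y] assms by simp

lemma a_same_q1_bound:
  assumes "valid_lm l m"
  shows "(l + 1/2) * \<bar>a_same 1 l m\<bar> \<le> 1"
proof -
  note lm = valid_lm_bounds[OF assms]
  define S where "S = sqrt ((l+m+1) * (l-m))"
  have S: "0 \<le> S" "S \<le> l + 1/2"
    using arith_geo_mean_sqrt[of "l+m+1" "l-m"] lm by (simp_all add: S_def)
  have D: "0 < 2*l * (2*l+2)" using lm by simp
  have "(l + 1/2) * (2 * S) \<le> (l + 1/2) * (2 * (l + 1/2))" using S lm by (intro mult_left_mono) auto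
  also have "\<dots> = 2*l * (2*l+2) - (2 * (l * l) + 2 * l - 1/2)" by (simp add: algebra_simps)
  also have "\<dots> \<le> 2*l * (2*l+2)" using lm(1) zero_le_square[of l] by linarith
  finally have num: "(l + 1/2) * (2 * S) \<le> 2*l * (2*l+2)" .
  have "(l + 1/2) * \<bar>a_same 1 l m\<bar> = (l + 1/2) * (2 * S) / (2*l * (2*l+2))"
    using S D lm by (simp add: a_same_def qnum_def S_def)
  then show ?thesis using num D by simp
qed

lemma b_same_q1_bound:
  assumes "valid_lm l m"
  shows "(l + 1/2) * \<bar>b_same 1 l m\<bar> \<le> 1"
proof -
  note lm = valid_lm_bounds[OF assms]
  have D: "0 < 2*l * (2*l+2)" using lm by simp
  have "(l + 1/2) * (2 * \<bar>m\<bar>) \<le> (l + 1/2) * (2 * l)" using lm by (intro mult_left_mono) auto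
  also have "\<dots> = 2*l * (2*l+2) - (2 * (l * l) + 3 * l)" by (simp add: algebra_simps)
  also have "\<dots> \<le> 2*l * (2*l+2)" using lm(1) zero_le_square[of l] by linarith
  finally have num: "(l + 1/2) * (2 * \<bar>m\<bar>) \<le> 2*l * (2*l+2)" .
  have "(l + 1/2) * \<bar>b_same 1 l m\<bar> = (l + 1/2) * (2 * \<bar>m\<bar>) / (2*l * (2*l+2))"
    using D lm by (simp add: b_same_def qnum_def abs_mult algebra_simps)
  then show ?thesis using num D by simp
qed

lemma ladder_bounded_q1:
  "ladder_bounded (a_same 1) (a_up 1) (a_down 1) 1"
  "ladder_bounded (b_same 1) (b_up 1) (b_down 1) 1"
  unfolding ladder_bounded_def
proof (safe)
  fix l m :: real assume v: "valid_lm l m"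
  note lm = valid_lm_bounds[OF v]
  show "(l + 1/2) * \<bar>a_same 1 l m\<bar> \<le> 1" "(l + 1/2) * \<bar>b_same 1 l m\<bar> \<le> 1"
    using a_same_q1_bound[OF v] b_same_q1_bound[OF v] by simp_all
  show "\<bar>a_up 1 l m\<bar> \<le> 1"
    using sqrt_mult_div_le_1[of "l+m+1" "l+m+2" "2*l+2"] lm by (simp add: a_up_def qnum_def)
  show "\<bar>a_down 1 l m\<bar> \<le> 1"
    using sqrt_mult_div_le_1[of "l-m" "l-m-1" "2*l"] lm by (auto simp: a_down_def qnum_def)
  show "\<bar>b_up 1 l m\<bar> \<le> 1"
    using sqrt_mult_div_le_1[of "l-m+1" "l+m+1" "2*l+2"] lm by (simp add: b_up_def qnum_def)
  show "\<bar>b_down 1 l m\<bar> \<le> 1"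
    using sqrt_mult_div_le_1[of "l-m" "l+m" "2*l"] lm by (simp add: b_down_def qnum_def)
qed

context
  fixes q :: real
  assumes q0: "0 < q" and q1: "q < 1"
begin

lemma one_minus_q2_pos: "0 < 1 - q\<^sup>2"
  using q0 q1 by (simp add: power_less_one_iff)

lemma qnum_lt1: "qnum q x = q powr (1 - x) * (1 - q powr (2 * x)) / (1 - q\<^sup>2)"
proof -
  define y where "y = q powr x"
  have y: "0 < y" using q0 by (simp add: y_def)
  have "qnum q x = (y - 1 / y) / (q - 1 / q)"
    using q0 q1 by (simp add: qnum_def y_def powr_minus inverse_eq_divide)
  also have "\<dots> = q / y * (1 - y * y) / (1 - q\<^sup>2)"
    using q0 q1 y one_minus_q2_pos by (simp add: field_simps power2_eq_square)
  also have "q / y * (1 - y * y) = q powr (1 - x) * (1 - q powr (2 * x))"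
    using q0 by (simp add: y_def powr_diff flip: powr_add)
  finally show ?thesis .
qed

lemma qnum_nonneg: "0 \<le> x \<Longrightarrow> 0 \<le> qnum q x"
  using q0 q1 one_minus_q2_pos powr_le1[of "2 * x" q] by (simp add: qnum_lt1)

lemma qnum_upper: "0 \<le> x \<Longrightarrow> qnum q x \<le> q powr (1 - x) / (1 - q\<^sup>2)"
  using q0 one_minus_q2_pos by (simp add: qnum_lt1 divide_right_mono mult_left_le)

lemma qnum_lower:
  assumes "1 \<le> x"
  shows "q powr (1 - x) \<le> qnum q x"
proof -
  have "q powr (2 * x) \<le> q powr 2" using assms q0 q1 by (intro powr_mono') auto
  then have "1 - q\<^sup>2 \<le> 1 - q powr (2 * x)" using q0 by (simp add: powr_numeral)
  then have "q powr (1 - x) * (1 - q\<^sup>2) \<le> q powr (1 - x) * (1 - q powr (2 * x))"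
    by (intro mult_left_mono) auto
  then show ?thesis using one_minus_q2_pos by (simp add: qnum_lt1 pos_le_divide_eq)
qed

lemma qnum_mult_upper:
  assumes "0 \<le> a" "0 \<le> b"
  shows "qnum q a * qnum q b \<le> 1 / (1 - q\<^sup>2)\<^sup>2 * q powr (2 - a - b)"
proof -
  have "qnum q a * qnum q b \<le> (q powr (1 - a) / (1 - q\<^sup>2)) * (q powr (1 - b) / (1 - q\<^sup>2))"
    using assms one_minus_q2_pos by (intro mult_mono qnum_upper qnum_nonneg) auto
  also have "\<dots> = 1 / (1 - q\<^sup>2)\<^sup>2 * (q powr (1 - a) * q powr (1 - b))"
    by (simp add: power2_eq_square)
  also have "q powr (1 - a) * q powr (1 - b) = q powr (2 - a - b)"
    using powr_add[of q "1 - a" "1 - b"] by (simp add: diff_add_eq add_diff_eq)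
  finally show ?thesis .
qed

lemma sqrt_qnum_mult_le:
  assumes "0 \<le> a" "0 \<le> b"
  shows "sqrt (qnum q a * qnum q b) \<le> q powr (1 - (a + b) / 2) / (1 - q\<^sup>2)"
proof -
  have "(1 - (a + b) / 2) + (1 - (a + b) / 2) = 2 - a - b" by simp
  then have "(q powr (1 - (a + b) / 2))\<^sup>2 = q powr (2 - a - b)"
    by (metis powr_add power2_eq_square)
  then have "1 / (1 - q\<^sup>2)\<^sup>2 * q powr (2 - a - b) = (q powr (1 - (a + b) / 2) / (1 - q\<^sup>2))\<^sup>2"
    by (simp add: power_divide)
  then have "sqrt (qnum q a * qnum q b) \<le> sqrt ((q powr (1 - (a + b) / 2) / (1 - q\<^sup>2))\<^sup>2)"
    using qnum_mult_upper[OF assms] by (intro real_sqrt_le_mono) simp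
  then show ?thesis using one_minus_q2_pos by simp
qed

lemma abs_div_qnum_le:
  assumes x: "\<bar>x\<bar> \<le> C * q powr e" and d: "1 \<le> d"
  shows "\<bar>x / qnum q d\<bar> \<le> C * q powr (e + d - 1)"
proof -
  have low: "q powr (1 - d) \<le> qnum q d" by (rule qnum_lower[OF d])
  have pos: "0 < q powr (1 - d)" using q0 by simp
  have pos_d: "0 < qnum q d" using low pos by linarith
  then have "\<bar>x / qnum q d\<bar> = \<bar>x\<bar> / qnum q d" by (simp add: abs_div)
  also have "\<dots> \<le> \<bar>x\<bar> / q powr (1 - d)" using low pos pos_d by (intro divide_left_mono) auto
  also have "\<dots> \<le> C * q powr e / q powr (1 - d)" using x pos by (intro divide_right_mono) auto
  also have "\<dots> = C * q powr (e + d - 1)"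
    using powr_diff[of q e "1 - d"] by (simp add: algebra_simps flip: times_divide_eq_right)
  finally show ?thesis .
qed

text \<open>Every coefficient of a and b is of this shape, up to sign and to further divisions.\<close>
lemma coeff_bound:
  assumes "0 \<le> a" "0 \<le> b" "1 \<le> d"
  shows "\<bar>q powr e / qnum q d * sqrt (qnum q a * qnum q b)\<bar> \<le> 1 / (1 - q\<^sup>2) * q powr (e + d - (a + b) / 2)"
proof -
  let ?s = "sqrt (qnum q a * qnum q b)"
  have "0 \<le> ?s" using assms qnum_nonneg by simp
  then have "\<bar>q powr e * ?s\<bar> = q powr e * ?s" by simp
  also have "\<dots> \<le> q powr e * (q powr (1 - (a + b) / 2) / (1 - q\<^sup>2))"
    by (rule mult_left_mono[OF sqrt_qnum_mult_le[OF assms(1,2)]]) simp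
  also have "\<dots> = 1 / (1 - q\<^sup>2) * q powr (e + 1 - (a + b) / 2)"
    by (simp add: add_diff_eq flip: powr_add)
  finally have "\<bar>q powr e * ?s / qnum q d\<bar> \<le> 1 / (1 - q\<^sup>2) * q powr (e + 1 - (a + b) / 2 + d - 1)"
    using assms(3) by (rule abs_div_qnum_le)
  then show ?thesis by (simp add: algebra_simps)
qed

lemma powr_coeff_le:
  assumes "0 \<le> C" "0 \<le> e"
  shows "C * q powr e \<le> C"
  using assms q0 q1 by (intro mult_left_le powr_le1) auto

lemma a_up_bound:
  assumes "valid_lm l m"
  shows "\<bar>a_up q l m\<bar> \<le> 1 / (1 - q\<^sup>2)"
proof -
  note lm = valid_lm_bounds[OF assms]
  have "\<bar>a_up q l m\<bar> \<le> 1 / (1 - q\<^sup>2) * q powr ((m - l - 1/2) + (2*l+2) - ((l+m+1) + (l+m+2)) / 2)"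
    unfolding a_up_def by (rule coeff_bound) (use lm in auto)
  also have "(m - l - 1/2) + (2*l+2) - ((l+m+1) + (l+m+2)) / 2 = 0" by (simp add: field_simps)
  finally show ?thesis using q0 by simp
qed

lemma a_down_bound:
  assumes "valid_lm l m"
  shows "\<bar>a_down q l m\<bar> \<le> 1 / (1 - q\<^sup>2)"
proof -
  note lm = valid_lm_bounds[OF assms]
  consider "m = l" | "m \<le> l - 1" using lm(4) by blast
  then show ?thesis
  proof cases
    case 1
    then show ?thesis using one_minus_q2_pos by (simp add: a_down_def qnum_def)
  next
    case 2
    have "\<bar>a_down q l m\<bar> \<le> 1 / (1 - q\<^sup>2) * q powr ((m + l + 1/2) + 2*l - ((l-m) + (l-m-1)) / 2)"
      unfolding a_down_def abs_minus_cancel by (rule coeff_bound) (use lm 2 in auto)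
    also have "\<dots> \<le> 1 / (1 - q\<^sup>2)"
      using lm one_minus_q2_pos by (intro powr_coeff_le) auto
    finally show ?thesis .
  qed
qed

lemma b_up_bound:
  assumes "valid_lm l m"
  shows "\<bar>b_up q l m\<bar> \<le> 1 / (1 - q\<^sup>2)"
proof -
  note lm = valid_lm_bounds[OF assms]
  have "\<bar>b_up q l m\<bar> \<le> 1 / (1 - q\<^sup>2) * q powr ((m + 1) + (2*l+2) - ((l-m+1) + (l+m+1)) / 2)"
    unfolding b_up_def abs_minus_cancel by (rule coeff_bound) (use lm in auto)
  also have "\<dots> \<le> 1 / (1 - q\<^sup>2)"
    using lm one_minus_q2_pos by (intro powr_coeff_le) auto
  finally show ?thesis .
qed

lemma b_down_bound:
  assumes "valid_lm l m"
  shows "\<bar>b_down q l m\<bar> \<le> 1 / (1 - q\<^sup>2)"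
proof -
  note lm = valid_lm_bounds[OF assms]
  have "\<bar>b_down q l m\<bar> \<le> 1 / (1 - q\<^sup>2) * q powr ((m + 1) + 2*l - ((l-m) + (l+m)) / 2)"
    unfolding b_down_def abs_minus_cancel by (rule coeff_bound) (use lm in auto)
  also have "\<dots> \<le> 1 / (1 - q\<^sup>2)"
    using lm one_minus_q2_pos by (intro powr_coeff_le) auto
  finally show ?thesis .
qed

lemma a_same_bound:
  assumes "valid_lm l m"
  shows "\<bar>a_same q l m\<bar> \<le> 2 / (1 - q\<^sup>2) * q powr (2 * l)"
proof -
  note lm = valid_lm_bounds[OF assms]
  let ?inner = "q powr (m - 1/2) / qnum q (2*l+2) * sqrt (qnum q (l+m+1) * qnum q (l-m))"
  have "\<bar>?inner\<bar> \<le> 1 / (1 - q\<^sup>2) * q powr ((m - 1/2) + (2*l+2) - ((l+m+1) + (l-m)) / 2)"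
    by (rule coeff_bound) (use lm in auto)
  also have "(m - 1/2) + (2*l+2) - ((l+m+1) + (l-m)) / 2 = m + l + 1" by (simp add: field_simps)
  finally have inner: "\<bar>?inner\<bar> \<le> 1 / (1 - q\<^sup>2) * q powr (m + l + 1)" .
  have "\<bar>1 + q\<^sup>2\<bar> \<le> 2" using q0 q1 power_le_one[of q 2] by simp
  then have "\<bar>(1 + q\<^sup>2) * ?inner\<bar> \<le> 2 * (1 / (1 - q\<^sup>2) * q powr (m + l + 1))"
    unfolding abs_mult[of "1 + q\<^sup>2" ?inner] by (rule mult_mono[OF _ inner]) auto
  then have "\<bar>(1 + q\<^sup>2) * ?inner\<bar> \<le> 2 * (1 / (1 - q\<^sup>2)) * q powr (m + l + 1)"
    by (simp only: mult.assoc)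
  then have "\<bar>(1 + q\<^sup>2) * ?inner / qnum q (2*l)\<bar> \<le> 2 * (1 / (1 - q\<^sup>2)) * q powr ((m + l + 1) + 2*l - 1)"
    by (rule abs_div_qnum_le) (use lm in auto)
  also have "\<dots> \<le> 2 * (1 / (1 - q\<^sup>2)) * q powr (2 * l)"
    using lm q0 q1 one_minus_q2_pos by (intro mult_left_mono powr_mono') auto
  finally show ?thesis by (simp add: a_same_def mult_ac)
qed

lemma b_same_bound:
  assumes "valid_lm l m"
  shows "\<bar>b_same q l m\<bar> \<le> 1 / (1 - q\<^sup>2)\<^sup>2 * q powr (2 * l)"
proof -
  note lm = valid_lm_bounds[OF assms]
  let ?C = "1 / (1 - q\<^sup>2)\<^sup>2"
  let ?A = "qnum q (l-m+1) * qnum q (l+m)" and ?B = "qnum q (l-m) * qnum q (l+m+1)"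
  have A: "0 \<le> ?A" "?A \<le> ?C * q powr (1 - 2*l)"
    using qnum_mult_upper[of "l-m+1" "l+m"] lm qnum_nonneg by (simp_all add: algebra_simps)
  have B: "0 \<le> ?B" "?B \<le> ?C * q powr (1 - 2*l)"
    using qnum_mult_upper[of "l-m" "l+m+1"] lm qnum_nonneg by (simp_all add: algebra_simps)
  have qB: "0 \<le> q\<^sup>2 * ?B" "q\<^sup>2 * ?B \<le> ?B"
    using B(1) q0 q1 power_le_one[of q 2] by (simp_all add: mult_left_le_one_le)
  then have "\<bar>?A - q\<^sup>2 * ?B\<bar> \<le> ?C * q powr (1 - 2*l)"
    unfolding abs_le_iff using A B by linarith
  then have "\<bar>(?A - q\<^sup>2 * ?B) / qnum q (2*l)\<bar> \<le> ?C * q powr ((1 - 2*l) + 2*l - 1)"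
    by (rule abs_div_qnum_le) (use lm in auto)
  then have "\<bar>(?A - q\<^sup>2 * ?B) / qnum q (2*l) / qnum q (2*l+2)\<bar> \<le> ?C * q powr (((1 - 2*l) + 2*l - 1) + (2*l+2) - 1)"
    by (rule abs_div_qnum_le) (use lm in auto)
  also have "\<dots> \<le> ?C * q powr (2 * l)"
    using lm q0 q1 by (intro mult_left_mono powr_mono') auto
  finally show ?thesis by (simp add: b_same_def mult.assoc)
qed

lemma weighted_powr_bounded:
  obtains B where "\<And>x. 0 \<le> x \<Longrightarrow> (x + 1/2) * q powr (2 * x) \<le> B"
proof -
  define t where "t = - ln q"
  have t: "0 < t" using q0 q1 by (simp add: t_def)
  have decay: "y * q powr y \<le> 1 / t" if "0 \<le> y" for y
  proof -
    have "t * y \<le> exp (t * y)" using exp_ge_add_one_self[of "t * y"] by linarith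
    then have "t * y * exp (- (t * y)) \<le> 1" by (simp add: exp_minus field_simps)
    moreover have "q powr y = exp (- (t * y))" using q0 by (simp add: powr_def t_def)
    ultimately show ?thesis using t by (simp add: field_simps)
  qed
  have "(x + 1/2) * q powr (2 * x) \<le> 1 / t / 2 + 1 / 2" if x: "0 \<le> x" for x
  proof -
    have "(x + 1/2) * q powr (2 * x) = (2 * x) * q powr (2 * x) / 2 + q powr (2 * x) / 2"
      by (simp add: algebra_simps)
    also have "\<dots> \<le> 1 / t / 2 + 1 / 2"
      using decay[of "2 * x"] x powr_coeff_le[of 1 "2 * x"] by simp
    finally show ?thesis .
  qed
  then show thesis by (rule that)
qed

lemma weighted_coeff_bounded:
  obtains B where "\<And>l C X. 0 \<le> l \<Longrightarrow> 0 \<le> C \<Longrightarrow> \<bar>X\<bar> \<le> C * q powr (2 * l) \<Longrightarrow>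
    (l + 1/2) * \<bar>X\<bar> \<le> C * B"
proof -
  obtain B where B: "\<And>x. 0 \<le> x \<Longrightarrow> (x + 1/2) * q powr (2 * x) \<le> B"
    using weighted_powr_bounded by blast
  have "(l + 1/2) * \<bar>X\<bar> \<le> C * B" if "0 \<le> l" "0 \<le> C" "\<bar>X\<bar> \<le> C * q powr (2 * l)" for l C X
  proof -
    have "(l + 1/2) * \<bar>X\<bar> \<le> (l + 1/2) * (C * q powr (2 * l))" using that by (intro mult_left_mono) auto
    also have "\<dots> = C * ((l + 1/2) * q powr (2 * l))" by simp
    also have "\<dots> \<le> C * B" using B[of l] that by (intro mult_left_mono) auto
    finally show ?thesis .
  qed
  then show thesis by (rule that)
qed

lemma ladder_bounded_a_lt1: "\<exists>K. ladder_bounded (a_same q) (a_up q) (a_down q) K"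
proof -
  obtain B where B: "\<And>l C X. 0 \<le> l \<Longrightarrow> 0 \<le> C \<Longrightarrow> \<bar>X\<bar> \<le> C * q powr (2 * l) \<Longrightarrow>
      (l + 1/2) * \<bar>X\<bar> \<le> C * B"
    using weighted_coeff_bounded by blast
  define K where "K = max (2 / (1 - q\<^sup>2) * B) (1 / (1 - q\<^sup>2))"
  have "ladder_bounded (a_same q) (a_up q) (a_down q) K"
    unfolding ladder_bounded_def
  proof (intro allI impI conjI)
    fix l m assume v: "valid_lm l m"
    have "(l + 1/2) * \<bar>a_same q l m\<bar> \<le> 2 / (1 - q\<^sup>2) * B"
      by (rule B[OF _ _ a_same_bound[OF v]]) (use valid_lm_bounds(1)[OF v] one_minus_q2_pos in auto)
    then show "(l + 1/2) * \<bar>a_same q l m\<bar> \<le> K" unfolding K_def by (rule max.coboundedI1)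
    show "\<bar>a_up q l m\<bar> \<le> K" "\<bar>a_down q l m\<bar> \<le> K"
      unfolding K_def using a_up_bound[OF v] a_down_bound[OF v] by (auto intro: max.coboundedI2)
  qed
  then show ?thesis by blast
qed

lemma ladder_bounded_b_lt1: "\<exists>K. ladder_bounded (b_same q) (b_up q) (b_down q) K"
proof -
  obtain B where B: "\<And>l C X. 0 \<le> l \<Longrightarrow> 0 \<le> C \<Longrightarrow> \<bar>X\<bar> \<le> C * q powr (2 * l) \<Longrightarrow>
      (l + 1/2) * \<bar>X\<bar> \<le> C * B"
    using weighted_coeff_bounded by blast
  define K where "K = max (1 / (1 - q\<^sup>2)\<^sup>2 * B) (1 / (1 - q\<^sup>2))"
  have "ladder_bounded (b_same q) (b_up q) (b_down q) K"
    unfolding ladder_bounded_def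
  proof (intro allI impI conjI)
    fix l m assume v: "valid_lm l m"
    have "(l + 1/2) * \<bar>b_same q l m\<bar> \<le> 1 / (1 - q\<^sup>2)\<^sup>2 * B"
      by (rule B[OF _ _ b_same_bound[OF v]]) (use valid_lm_bounds(1)[OF v] one_minus_q2_pos in auto)
    then show "(l + 1/2) * \<bar>b_same q l m\<bar> \<le> K" unfolding K_def by (rule max.coboundedI1)
    show "\<bar>b_up q l m\<bar> \<le> K" "\<bar>b_down q l m\<bar> \<le> K"
      unfolding K_def using b_up_bound[OF v] b_down_bound[OF v] by (auto intro: max.coboundedI2)
  qed
  then show ?thesis by blast
qed

end

theorem proposition5:
  fixes q :: real
  assumes "0 < q" and "q \<le> 1"
  shows "\<forall>T \<in> piAlg q. bounded_fin (\<lambda>v i. Dop (T v) i - T (Dop v) i)"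
proof -
  have "\<exists>Ka Kb. ladder_bounded (a_same q) (a_up q) (a_down q) Ka \<and>
      ladder_bounded (b_same q) (b_up q) (b_down q) Kb"
  proof (cases "q = 1")
    case True
    then show ?thesis using ladder_bounded_q1 by blast
  next
    case False
    then have "q < 1" using assms(2) by simp
    then show ?thesis using ladder_bounded_a_lt1 ladder_bounded_b_lt1 assms(1) by blast
  qed
  then obtain Ka Kb where a: "ladder_bounded (a_same q) (a_up q) (a_down q) Ka"
    and b: "ladder_bounded (b_same q) (b_up q) (b_down q) Kb" by blast
  show ?thesis
    using lipschitz_piAlg[OF a b] bounded_fin_Dcomm unfolding Dcomm_def by blast
qed

end
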